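(* Let $0<\mu<1$. On zero-mean functions on $\mathbb T^3$ define Fourier multipliers: $\mathcal Q$ with symbol $\widehat{\mathcal Q}(k,l,m)=\frac{\sqrt2}{\sqrt{1+\mu^2+\sqrt{(1+\mu^2)^2-4\mu^2\frac{m^2}{k^2+l^2+m^2}}}}$ (i.e. $\mathcal Q=\sqrt{2(1+\mu^2+\sqrt{(1+\mu^2)^2-4\mu^2\partial_z^2\Delta^{-1}})^{-1}}$), and $$\mathcal C=-\mathcal Q(1-\mu^2\partial_z^2\Delta^{-1}\mathcal Q^2)^{-1},\quad\mathcal A=-\mathcal C\mathcal Q^{-1},\quad\mathcal B=\partial_z^2\Delta^{-1}\mathcal C\mathcal Q,\quad\mathcal D=\mathcal Q^{-1}.$$ For a scalar function $\varphi$ define the 7-component states $$V_\alpha\varphi=\Big(\varphi,\ \mathbf 0_3,\ \mu\mathcal A\Delta^{-1}\partial_z\nabla\varphi+(0,0,-\mu\varphi+\mu^3\mathcal B\varphi)\Big),\qquad V_\beta\varphi=\Big(0,\ (\mu^2\mathcal C\Delta^{-1}\partial_z\nabla_h\varphi,\ \mathcal D\varphi),\ \mathbf 0_3\Big).$$ Then for every such $\varphi$, $$(\mathcal L_A+\mu\mathcal L_M)(V_\alpha\varphi)+\mu\mathcal Q\partial_z(V_\beta\varphi)=0=(\mathcal L_A+\mu\mathcal L_M)(V_\beta\varphi)+\mu\mathcal Q\partial_z(V_\alpha\varphi).$$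
   Context: Spatial domain $\mathbb T^3$ with coordinates $(x,y,z)$ and Fourier variables $(k,l,m)$. States are $V=(r,\mathbf u,\mathbf b)$ with $\mathbf u=(\mathbf u_h,u_3)$, $\mathbf b=(\mathbf b_h,b_3)$, $\mathbf w_h=(w_1,w_2)$. $\nabla_h=(\partial_x,\partial_y)$; $\Delta^{-1}$ is the inverse Laplacian on zero-mean functions, so $\partial_z^2\Delta^{-1}$ has symbol $m^2/(k^2+l^2+m^2)$. $\mathcal L_AV=(0,(-\nabla_hb_3+\partial_z\mathbf b_h,0),(\partial_z\mathbf u_h,-\nabla_h\cdot\mathbf u_h))$, $\mathcal L_MV=(-\nabla\cdot\mathbf u,-\nabla r,\mathbf 0)$. *)

theory Defs
  imports Complex_Main
begin

text \<open>Zero-mean functions on the 3-torus are represented by their Fourier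
coefficients, indexed by frequencies (k,l,m) in Z^3. All operators in the
statement are Fourier multipliers and act coefficientwise.\<close>

type_synonym freq = "int \<times> int \<times> int"
type_synonym field = "freq \<Rightarrow> complex"
type_synonym vfield = "field \<times> field \<times> field"
type_synonym state = "field \<times> vfield \<times> vfield"  \<comment> \<open>(r, u, b)\<close>

definition fzero :: field where "fzero = (\<lambda>_. 0)"
definition fadd :: "field \<Rightarrow> field \<Rightarrow> field" where "fadd f g = (\<lambda>\<xi>. f \<xi> + g \<xi>)"
definition fneg :: "field \<Rightarrow> field" where "fneg f = (\<lambda>\<xi>. - f \<xi>)"
definition fscale :: "real \<Rightarrow> field \<Rightarrow> field" where "fscale c f = (\<lambda>\<xi>. complex_of_real c * f \<xi>)"

definition dx :: "field \<Rightarrow> field" where "dx f = (\<lambda>(k,l,m). \<i> * of_int k * f (k,l,m))"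
definition dy :: "field \<Rightarrow> field" where "dy f = (\<lambda>(k,l,m). \<i> * of_int l * f (k,l,m))"
definition dz :: "field \<Rightarrow> field" where "dz f = (\<lambda>(k,l,m). \<i> * of_int m * f (k,l,m))"

definition nsq :: "freq \<Rightarrow> real" where "nsq = (\<lambda>(k,l,m). real_of_int (k^2 + l^2 + m^2))"

definition lapinv :: "field \<Rightarrow> field" where
  "lapinv f = (\<lambda>\<xi>. if \<xi> = (0,0,0) then 0 else - f \<xi> / complex_of_real (nsq \<xi>))"

definition mult :: "(freq \<Rightarrow> real) \<Rightarrow> field \<Rightarrow> field" where
  "mult \<sigma> f = (\<lambda>\<xi>. complex_of_real (\<sigma> \<xi>) * f \<xi>)"

text \<open>Symbol of dz^2 lapinv: m^2/(k^2+l^2+m^2).\<close>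
definition zsym :: "freq \<Rightarrow> real" where
  "zsym = (\<lambda>(k,l,m). real_of_int (m^2) / nsq (k,l,m))"

definition dz2lapinv :: "field \<Rightarrow> field" where "dz2lapinv f = dz (dz (lapinv f))"

definition Qsym :: "real \<Rightarrow> freq \<Rightarrow> real" where
  "Qsym \<mu> \<xi> = sqrt 2 / sqrt (1 + \<mu>^2 + sqrt ((1 + \<mu>^2)^2 - 4 * \<mu>^2 * zsym \<xi>))"

definition Qop :: "real \<Rightarrow> field \<Rightarrow> field" where "Qop \<mu> = mult (Qsym \<mu>)"
definition Qinv :: "real \<Rightarrow> field \<Rightarrow> field" where "Qinv \<mu> = mult (\<lambda>\<xi>. 1 / Qsym \<mu> \<xi>)"

text \<open>Inverse of the multiplier 1 - mu^2 dz^2 lapinv Q^2 (reciprocal symbol).\<close>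
definition Minv :: "real \<Rightarrow> field \<Rightarrow> field" where
  "Minv \<mu> = mult (\<lambda>\<xi>. 1 / (1 - \<mu>^2 * zsym \<xi> * (Qsym \<mu> \<xi>)^2))"

definition Cop :: "real \<Rightarrow> field \<Rightarrow> field" where "Cop \<mu> f = fneg (Qop \<mu> (Minv \<mu> f))"
definition Aop :: "real \<Rightarrow> field \<Rightarrow> field" where "Aop \<mu> f = fneg (Cop \<mu> (Qinv \<mu> f))"
definition Bop :: "real \<Rightarrow> field \<Rightarrow> field" where "Bop \<mu> f = dz2lapinv (Cop \<mu> (Qop \<mu> f))"
definition Dop :: "real \<Rightarrow> field \<Rightarrow> field" where "Dop \<mu> = Qinv \<mu>"

definition Valpha :: "real \<Rightarrow> field \<Rightarrow> state" where
  "Valpha \<mu> \<phi> = (\<phi>, (fzero, fzero, fzero),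
     (fscale \<mu> (Aop \<mu> (lapinv (dz (dx \<phi>)))),
      fscale \<mu> (Aop \<mu> (lapinv (dz (dy \<phi>)))),
      fadd (fscale \<mu> (Aop \<mu> (lapinv (dz (dz \<phi>)))))
           (fadd (fneg (fscale \<mu> \<phi>)) (fscale (\<mu>^3) (Bop \<mu> \<phi>)))))"

definition Vbeta :: "real \<Rightarrow> field \<Rightarrow> state" where
  "Vbeta \<mu> \<phi> = (fzero,
     (fscale (\<mu>^2) (Cop \<mu> (lapinv (dz (dx \<phi>)))),
      fscale (\<mu>^2) (Cop \<mu> (lapinv (dz (dy \<phi>)))),
      Dop \<mu> \<phi>),
     (fzero, fzero, fzero))"

definition szero :: state where "szero = (fzero, (fzero, fzero, fzero), (fzero, fzero, fzero))"

definition smap :: "(field \<Rightarrow> field) \<Rightarrow> state \<Rightarrow> state" where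
  "smap T V = (case V of (r, (u1, u2, u3), (b1, b2, b3)) \<Rightarrow>
     (T r, (T u1, T u2, T u3), (T b1, T b2, T b3)))"

definition sadd :: "state \<Rightarrow> state \<Rightarrow> state" where
  "sadd V W = (case V of (r, (u1, u2, u3), (b1, b2, b3)) \<Rightarrow>
     (case W of (r', (u1', u2', u3'), (b1', b2', b3')) \<Rightarrow>
       (fadd r r', (fadd u1 u1', fadd u2 u2', fadd u3 u3'), (fadd b1 b1', fadd b2 b2', fadd b3 b3'))))"

definition LA :: "state \<Rightarrow> state" where
  "LA V = (case V of (r, (u1, u2, u3), (b1, b2, b3)) \<Rightarrow>
     (fzero,
      (fadd (fneg (dx b3)) (dz b1), fadd (fneg (dy b3)) (dz b2), fzero),
      (dz u1, dz u2, fneg (fadd (dx u1) (dy u2)))))"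

definition LM :: "state \<Rightarrow> state" where
  "LM V = (case V of (r, (u1, u2, u3), (b1, b2, b3)) \<Rightarrow>
     (fneg (fadd (fadd (dx u1) (dy u2)) (dz u3)),
      (fneg (dx r), fneg (dy r), fneg (dz r)),
      (fzero, fzero, fzero)))"

end

theory Submission
  imports Defs "HOL-Library.Function_Algebras"
begin

text \<open>All operators are Fourier multipliers, so with the pointwise ring structure on coefficient
fields each operator T acts as multiplication by its symbol T 1, and at a fixed frequency every
component of the two identities becomes a polynomial identity in the symbols. It follows from five
relations: Q Q^-1 = 1; dz^2 Delta^-1 has symbol zsym; Delta Delta^-1 dz = dz, also at the zero mode
where dz vanishes; M (1 - mu^2 zsym Q^2) = 1, the bracket being positive because zsym <= 1,
Q^2 <= 2/(1 + mu^2) and mu < 1; and Q^2 = 2/(a + sqrt(a^2 - 4 mu^2 zsym)) with a = 1 + mu^2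
is a root of mu^2 zsym t^2 - a t + 1.\<close>

lemma zsym_nonneg: "0 \<le> zsym \<xi>"
  by (cases \<xi>) (simp add: zsym_def nsq_def)

lemma zsym_le_one: "zsym \<xi> \<le> 1"
proof (cases \<xi>)
  case (fields k l m)
  have "a / b \<le> 1" if "0 \<le> a" and "a \<le> b" for a b :: real
    using that by (cases "b = 0") (auto simp: divide_le_eq_1)
  then show ?thesis
    by (simp add: fields zsym_def nsq_def)
qed

lemma reciprocal_quadratic_root:
  fixes a c s :: "'a::field"
  assumes "s\<^sup>2 = a\<^sup>2 - 4 * c" and "a + s \<noteq> 0"
  shows "c * (2 / (a + s))\<^sup>2 - a * (2 / (a + s)) + 1 = 0"
proof -
  define t where "t = 2 / (a + s)"
  have t: "t * (a + s) = 2"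
    using assms(2) by (simp add: t_def field_simps)
  have "(a + s)\<^sup>2 * (c * t\<^sup>2 - a * t + 1) = c * (t * (a + s))\<^sup>2 - a * (t * (a + s)) * (a + s) + (a + s)\<^sup>2"
    by (simp add: power2_eq_square algebra_simps)
  also have "\<dots> = s\<^sup>2 - (a\<^sup>2 - 4 * c)"
    unfolding t by (simp add: power2_eq_square algebra_simps)
  finally have "(a + s)\<^sup>2 * (c * t\<^sup>2 - a * t + 1) = 0"
    using assms(1) by simp
  then show ?thesis
    using assms(2) by (simp add: t_def)
qed

lemma Qsym_discriminant_nonneg: "0 \<le> (1 + \<mu>\<^sup>2)\<^sup>2 - 4 * \<mu>\<^sup>2 * zsym \<xi>"
proof -
  have "4 * \<mu>\<^sup>2 * zsym \<xi> \<le> 4 * \<mu>\<^sup>2"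
    using zsym_le_one by (simp add: mult_left_le)
  moreover have "(1 + \<mu>\<^sup>2)\<^sup>2 - 4 * \<mu>\<^sup>2 = (1 - \<mu>\<^sup>2)\<^sup>2"
    by algebra
  ultimately show ?thesis
    by (metis diff_ge_0_iff_ge order_trans zero_le_power2)
qed

lemma Qsym_denominator_pos: "0 < 1 + \<mu>\<^sup>2 + sqrt ((1 + \<mu>\<^sup>2)\<^sup>2 - 4 * \<mu>\<^sup>2 * zsym \<xi>)"
  using Qsym_discriminant_nonneg by (simp add: add_pos_nonneg)

lemma Qsym_squared:
  "(Qsym \<mu> \<xi>)\<^sup>2 = 2 / (1 + \<mu>\<^sup>2 + sqrt ((1 + \<mu>\<^sup>2)\<^sup>2 - 4 * \<mu>\<^sup>2 * zsym \<xi>))"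
  using less_imp_le[OF Qsym_denominator_pos] by (simp add: Qsym_def power_divide)

lemma Qsym_pos: "0 < Qsym \<mu> \<xi>"
  using Qsym_denominator_pos[of \<mu> \<xi>] unfolding Qsym_def by simp

lemma Qsym_quartic:
  "\<mu>\<^sup>2 * zsym \<xi> * (Qsym \<mu> \<xi>)^4 - (1 + \<mu>\<^sup>2) * (Qsym \<mu> \<xi>)\<^sup>2 + 1 = 0"
proof -
  let ?s = "sqrt ((1 + \<mu>\<^sup>2)\<^sup>2 - 4 * \<mu>\<^sup>2 * zsym \<xi>)"
  have "?s\<^sup>2 = (1 + \<mu>\<^sup>2)\<^sup>2 - 4 * (\<mu>\<^sup>2 * zsym \<xi>)"
    using Qsym_discriminant_nonneg by simp
  moreover have "1 + \<mu>\<^sup>2 + ?s \<noteq> 0"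
    using Qsym_denominator_pos by (metis less_irrefl)
  ultimately have "\<mu>\<^sup>2 * zsym \<xi> * ((Qsym \<mu> \<xi>)\<^sup>2)\<^sup>2 - (1 + \<mu>\<^sup>2) * (Qsym \<mu> \<xi>)\<^sup>2 + 1 = 0"
    unfolding Qsym_squared by (rule reciprocal_quadratic_root)
  then show ?thesis
    by simp
qed

lemma resolvent_symbol_less_one:
  assumes "\<mu>\<^sup>2 < 1"
  shows "\<mu>\<^sup>2 * zsym \<xi> * (Qsym \<mu> \<xi>)\<^sup>2 < 1"
proof -
  have "(Qsym \<mu> \<xi>)\<^sup>2 \<le> 2 / (1 + \<mu>\<^sup>2)"
    unfolding Qsym_squared using Qsym_discriminant_nonneg Qsym_denominator_pos[of \<mu> \<xi>]
    by (intro divide_left_mono mult_pos_pos) (auto intro: add_pos_nonneg)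
  then have "\<mu>\<^sup>2 * zsym \<xi> * (Qsym \<mu> \<xi>)\<^sup>2 \<le> \<mu>\<^sup>2 * 1 * (2 / (1 + \<mu>\<^sup>2))"
    using zsym_nonneg zsym_le_one by (intro mult_mono) auto
  also have "\<dots> < 1"
    using assms by (simp add: divide_less_eq add_pos_nonneg)
  finally show ?thesis .
qed

lemma fadd_eq_plus: "fadd f g = f + g"
  by (simp add: fadd_def fun_eq_iff)

lemma fneg_eq_uminus: "fneg f = - f"
  by (simp add: fneg_def fun_eq_iff)

lemma fzero_eq_zero: "fzero = 0"
  by (simp add: fzero_def fun_eq_iff)

lemma fscale_eq_times: "fscale c f = (\<lambda>_. complex_of_real c) * f"
  by (simp add: fscale_def fun_eq_iff)

lemma mult_eq_symbol_times: "mult \<sigma> f = mult \<sigma> 1 * f"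
  by (simp add: mult_def fun_eq_iff)

lemma dx_eq_symbol_times: "dx f = dx 1 * f"
  by (simp add: dx_def fun_eq_iff)

lemma dy_eq_symbol_times: "dy f = dy 1 * f"
  by (simp add: dy_def fun_eq_iff)

lemma dz_eq_symbol_times: "dz f = dz 1 * f"
  by (simp add: dz_def fun_eq_iff)

lemma lapinv_eq_symbol_times: "lapinv f = lapinv 1 * f"
  by (simp add: lapinv_def fun_eq_iff)

lemma Qop_Qinv_symbol: "Qop \<mu> 1 \<xi> * Qinv \<mu> 1 \<xi> = 1"
  using Qsym_pos[of \<mu> \<xi>] by (simp add: Qop_def Qinv_def mult_def flip: of_real_mult)

lemma nsq_eq_0_iff: "nsq \<xi> = 0 \<longleftrightarrow> \<xi> = (0, 0, 0)"
proof (cases \<xi>)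
  case (fields k l m)
  have "k\<^sup>2 + l\<^sup>2 + m\<^sup>2 = 0 \<longleftrightarrow> k = 0 \<and> l = 0 \<and> m = 0"
    by (simp add: add_nonneg_eq_0_iff)
  then show ?thesis
    unfolding fields nsq_def by (simp only: case_prod_conv of_int_eq_0_iff prod.inject)
qed

lemma lapinv_symbol: "lapinv 1 \<xi> = - 1 / complex_of_real (nsq \<xi>)"
  by (simp add: lapinv_def nsq_eq_0_iff)

lemma dz_dz_lapinv_symbol: "dz 1 \<xi> * dz 1 \<xi> * lapinv 1 \<xi> = complex_of_real (zsym \<xi>)"
proof (cases \<xi>)
  case (fields k l m)
  have "dz 1 \<xi> * dz 1 \<xi> = - complex_of_real (real_of_int (m\<^sup>2))"
    by (simp add: fields dz_def power2_eq_square algebra_simps)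
  then show ?thesis
    by (simp add: lapinv_symbol fields zsym_def)
qed

lemma laplacian_lapinv_dz_symbol:
  "(dx 1 \<xi> ^ 2 + dy 1 \<xi> ^ 2 + dz 1 \<xi> ^ 2) * lapinv 1 \<xi> * dz 1 \<xi> = dz 1 \<xi>"
proof (cases "nsq \<xi> = 0")
  case True
  then show ?thesis
    by (simp add: nsq_eq_0_iff dz_def)
next
  case False
  have "dx 1 \<xi> ^ 2 + dy 1 \<xi> ^ 2 + dz 1 \<xi> ^ 2 = - complex_of_real (nsq \<xi>)"
    by (cases \<xi>) (simp add: dx_def dy_def dz_def nsq_def power_mult_distrib)
  with False show ?thesis
    by (simp add: lapinv_symbol)
qed

lemma Minv_symbol_resolvent:
  assumes "\<mu>\<^sup>2 < 1"
  shows "Minv \<mu> 1 \<xi> * (1 - complex_of_real \<mu> ^ 2 * complex_of_real (zsym \<xi>) * Qop \<mu> 1 \<xi> ^ 2) = 1"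
proof -
  have "complex_of_real (\<mu>\<^sup>2 * zsym \<xi> * (Qsym \<mu> \<xi>)\<^sup>2) \<noteq> 1"
    using resolvent_symbol_less_one[OF assms, of \<xi>] by (metis less_irrefl of_real_eq_1_iff)
  then show ?thesis
    by (simp add: Minv_def Qop_def mult_def)
qed

lemma Qop_symbol_quartic:
  "complex_of_real \<mu> ^ 2 * complex_of_real (zsym \<xi>) * Qop \<mu> 1 \<xi> ^ 4
     - (1 + complex_of_real \<mu> ^ 2) * Qop \<mu> 1 \<xi> ^ 2 + 1 = 0"
proof -
  have "complex_of_real (\<mu>\<^sup>2 * zsym \<xi> * (Qsym \<mu> \<xi>)^4 - (1 + \<mu>\<^sup>2) * (Qsym \<mu> \<xi>)\<^sup>2 + 1) = 0"
    by (simp only: Qsym_quartic of_real_0)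
  then show ?thesis
    by (simp add: Qop_def mult_def)
qed

lemma symbol_relations:
  assumes "\<mu>\<^sup>2 < 1"
  shows "\<forall>\<xi>. Qop \<mu> 1 \<xi> * Qinv \<mu> 1 \<xi> = 1
      \<and> dz 1 \<xi> * dz 1 \<xi> * lapinv 1 \<xi> = complex_of_real (zsym \<xi>)
      \<and> (dx 1 \<xi> ^ 2 + dy 1 \<xi> ^ 2 + dz 1 \<xi> ^ 2) * lapinv 1 \<xi> * dz 1 \<xi> = dz 1 \<xi>
      \<and> Minv \<mu> 1 \<xi> * (1 - complex_of_real \<mu> ^ 2 * complex_of_real (zsym \<xi>) * Qop \<mu> 1 \<xi> ^ 2) = 1
      \<and> complex_of_real \<mu> ^ 2 * complex_of_real (zsym \<xi>) * Qop \<mu> 1 \<xi> ^ 4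
          - (1 + complex_of_real \<mu> ^ 2) * Qop \<mu> 1 \<xi> ^ 2 + 1 = 0"
  using assms by (simp add: Qop_Qinv_symbol dz_dz_lapinv_symbol laplacian_lapinv_dz_symbol
      Minv_symbol_resolvent Qop_symbol_quartic)

theorem lemma2p2:
  fixes \<mu> :: real and \<phi> :: field
  assumes "0 < \<mu>" and "\<mu> < 1"
    and "\<phi> (0, 0, 0) = 0"
  shows "sadd (sadd (LA (Valpha \<mu> \<phi>)) (smap (fscale \<mu>) (LM (Valpha \<mu> \<phi>))))
              (smap (\<lambda>f. fscale \<mu> (Qop \<mu> (dz f))) (Vbeta \<mu> \<phi>)) = szero
       \<and> sadd (sadd (LA (Vbeta \<mu> \<phi>)) (smap (fscale \<mu>) (LM (Vbeta \<mu> \<phi>))))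
              (smap (\<lambda>f. fscale \<mu> (Qop \<mu> (dz f))) (Valpha \<mu> \<phi>)) = szero"
proof -
  define X Y Z L Q QI M
    where "X = dx 1" and "Y = dy 1" and "Z = dz 1" and "L = lapinv 1"
      and "Q = Qop \<mu> 1" and "QI = Qinv \<mu> 1" and "M = Minv \<mu> 1"
  have multipliers: "dx f = X * f" "dy f = Y * f" "dz f = Z * f" "lapinv f = L * f"
    "Qop \<mu> f = Q * f" "Qinv \<mu> f = QI * f" "Minv \<mu> f = M * f" for f
    unfolding X_def Y_def Z_def L_def Q_def QI_def M_def Qop_def Qinv_def Minv_def
    by (rule dx_eq_symbol_times dy_eq_symbol_times dz_eq_symbol_times lapinv_eq_symbol_times
        mult_eq_symbol_times)+
  have "\<mu>\<^sup>2 < 1"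
    using assms(1,2) by (simp add: power_less_one_iff)
  note relations = symbol_relations[OF this, folded X_def Y_def Z_def L_def Q_def QI_def M_def]
  show ?thesis
    unfolding Valpha_def Vbeta_def LA_def LM_def sadd_def smap_def szero_def
      Aop_def Bop_def Cop_def Dop_def dz2lapinv_def multipliers
      fadd_eq_plus fneg_eq_uminus fzero_eq_zero fscale_eq_times prod.case prod.inject
    \<comment> \<open>algebra fails on pure ring identities in the presence of hypotheses,
      so those components are retried without the relations\<close>
    by (intro conjI; subst fun_eq_iff; rule all_forward[OF relations];
        simp only: plus_fun_apply times_fun_apply uminus_apply zero_fun_apply of_real_power
          mult_zero_right add_0 add_0_right minus_zero;
        (algebra | erule thin_rl, algebra))
qed

end
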